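(* Let $\mathbf X=\{X_n\}$ and $\mathbf Y=\{Y_n\}$ be general sources such that $$\inf_{m>0}\ \liminf_{n\to\infty}\ \inf_{c\in\mathbb R}\Big\{\Pr\Big\{\log\tfrac{1}{P_{Y_n}(Y_n)}<c+m\Big\}-\Pr\Big\{\log\tfrac{1}{P_{X_n}(X_n)}<c\Big\}\Big\}\ \ge 0 .$$ Then $$\inf_{0<\epsilon<1}\ \liminf_{n\to\infty}\ \inf_{0\le\delta<1-\epsilon}\{c_n^x(\delta+\epsilon)-c_n^y(\delta)\}\ \ge 0 .$$
   Context: Logarithms are natural. A general source $\mathbf X=\{X_n\}_{n\ge1}$ is a sequence of random variables, $X_n$ taking values in a countable set $\mathcal X_n$, with no consistency requirements between different $n$. Similarly $Y_n$ takes values in a countable set $\mathcal Y_n$. For a random variable $Z$ on a countable set $\mathcal Z$ with pmf $P_Z$, list the elements of positive probability as $z_1,z_2,\dots$ (a finite or countably infinite list) with $P_Z(z_1)\ge P_Z(z_2)\ge\cdots$ (ties broken arbitrarily). Set $\delta_0=0$ and $\delta_k=\sum_{i\le k}P_Z(z_i)$. For $\delta\in[0,1)$ define $c^z(\delta)=\log\frac{1}{P_Z(z_k)}$, where $k$ is the unique index with $\delta\in[\delta_{k-1},\delta_k)$. Here $c_n^x$ and $c_n^y$ denote this function built from $P_{X_n}$ and from $P_{Y_n}$ respectively. *)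

theory Defs
  imports "HOL-Probability.Probability"
begin

definition enum_index :: "'a pmf \<Rightarrow> nat set" where
  "enum_index p = (if finite (set_pmf p) then {..<card (set_pmf p)} else UNIV)"

definition sorted_enum :: "'a pmf \<Rightarrow> (nat \<Rightarrow> 'a) \<Rightarrow> bool" where
  "sorted_enum p z \<longleftrightarrow> bij_betw z (enum_index p) (set_pmf p) \<and>
     (\<forall>i\<in>enum_index p. \<forall>j\<in>enum_index p. i \<le> j \<longrightarrow> pmf p (z j) \<le> pmf p (z i))"

text \<open>The function c^z(delta): with delta_k = sum of the first k probabilities (0-based,
  element z k occupies [delta_k, delta_{k+1})), c(delta) = log (1 / P(z_k)).\<close>
definition cfun :: "'a pmf \<Rightarrow> real \<Rightarrow> real" where
  "cfun p \<delta> = (let z = (SOME z. sorted_enum p z);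
      k = (THE k. k \<in> enum_index p \<and> (\<Sum>i<k. pmf p (z i)) \<le> \<delta> \<and> \<delta> < (\<Sum>i\<le>k. pmf p (z i)))
    in ln (1 / pmf p (z k)))"

end

theory Submission imports Defs begin

(*
  The function  cfun p  is the quantile function of the self-information
  ln (1 / pmf p x) under p, computed along an enumeration of the support in
  non-increasing order of probability.

  1. Sorted enumerations exist: a greedy construction repeatedly picks a
     most probable element not yet chosen (a maximum exists because only
     finitely many points have probability >= t > 0).
  2. Quantile characterisation of cfun: for 0 <= delta < 1,
       delta < P{ln (1/p) <= cfun p delta},  and
       delta < P{ln (1/p) < t}  implies  cfun p delta < t.
  3. A single-letter comparison: if P_Y{ln(1/P_Y) < c + m} exceeds
     P_X{ln(1/P_X) < c} - eps for every c, then
     c^x(delta + eps) - c^y(delta) > -2m.  The theorem follows by passing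
     this bound through the liminf and letting m tend to 0.
*)

lemma finite_pmf_ge:
  fixes p :: "'a pmf" assumes t: "t > 0"
  shows "finite {x. t \<le> pmf p x}"
proof (rule ccontr)
  assume inf: "infinite {x. t \<le> pmf p x}"
  obtain n :: nat where n: "real n > 1 / t" using reals_Archimedean2 by blast
  obtain B where B: "finite B" "card B = n" "B \<subseteq> {x. t \<le> pmf p x}"
    using infinite_arbitrarily_large[OF inf] by blast
  have "real n * t = (\<Sum>x\<in>B. t)" using B by simp
  also have "\<dots> \<le> sum (pmf p) B" using B by (intro sum_mono) auto
  also have "\<dots> = measure_pmf.prob p B" using B by (simp add: measure_measure_pmf_finite)
  also have "\<dots> \<le> 1" by simp
  finally have "real n * t \<le> 1" .
  with n t show False by (simp add: field_simps)
qed

lemma pmf_max_exists: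
  assumes "set_pmf p - A \<noteq> {}"
  shows "\<exists>x. x \<in> set_pmf p - A \<and> (\<forall>y\<in>set_pmf p - A. pmf p y \<le> pmf p x)"
proof -
  obtain w where w: "w \<in> set_pmf p - A" using assms by blast
  define B where "B = {x \<in> set_pmf p - A. pmf p w \<le> pmf p x}"
  have "pmf p w > 0" using w by (simp add: pmf_positive)
  then have fin: "finite B" unfolding B_def
    by (rule finite_subset[OF _ finite_pmf_ge, rotated]) auto
  have "w \<in> B" using w by (simp add: B_def)
  then obtain x where x: "x \<in> B" "\<forall>y\<in>B. pmf p y \<le> pmf p x"
    using fin by (metis (no_types, lifting) Max_ge Max_in empty_iff finite_imageI image_eqI imageE)
  have "pmf p w \<le> pmf p x" using x by (simp add: B_def)
  then show ?thesis using x by (intro exI[of _ x]) (force simp: B_def)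
qed

definition pick :: "'a pmf \<Rightarrow> 'a set \<Rightarrow> 'a" where
  "pick p A = (SOME x. x \<in> set_pmf p - A \<and> (\<forall>y\<in>set_pmf p - A. pmf p y \<le> pmf p x))"

lemma pick_spec:
  assumes "set_pmf p - A \<noteq> {}"
  shows "pick p A \<in> set_pmf p - A" "\<And>y. y \<in> set_pmf p - A \<Longrightarrow> pmf p y \<le> pmf p (pick p A)"
  using someI_ex[OF pmf_max_exists[OF assms]] unfolding pick_def by auto

fun greedy :: "'a pmf \<Rightarrow> nat \<Rightarrow> 'a list" where
  "greedy p 0 = []"
| "greedy p (Suc n) = greedy p n @ [pick p (set (greedy p n))]"

definition gz :: "'a pmf \<Rightarrow> nat \<Rightarrow> 'a" where
  "gz p n = pick p (set (greedy p n))"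

lemma gz_eq: "gz p n = pick p (gz p ` {..<n})"
proof -
  have "set (greedy p n) = gz p ` {..<n}"
    by (induction n) (auto simp: gz_def lessThan_Suc)
  then show ?thesis by (simp add: gz_def)
qed

lemma enum_index_down: "j \<in> enum_index p \<Longrightarrow> i \<le> j \<Longrightarrow> i \<in> enum_index p"
  by (auto simp: enum_index_def split: if_splits)

lemma gz_rest: assumes "n \<in> enum_index p" shows "set_pmf p - gz p ` {..<n} \<noteq> {}"
proof
  assume "set_pmf p - gz p ` {..<n} = {}"
  hence sub: "set_pmf p \<subseteq> gz p ` {..<n}" by blast
  then have fin: "finite (set_pmf p)" using finite_subset by blast
  have "card (set_pmf p) \<le> card (gz p ` {..<n})" by (rule card_mono[OF _ sub]) auto
  also have "\<dots> \<le> n" using card_image_le[of "{..<n}" "gz p"] by simp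
  finally show False using assms fin by (simp add: enum_index_def)
qed

lemma gz_in: "n \<in> enum_index p \<Longrightarrow> gz p n \<in> set_pmf p - gz p ` {..<n}"
  using pick_spec(1)[OF gz_rest] by (simp add: gz_eq[of p n])

lemma gz_max: "n \<in> enum_index p \<Longrightarrow> y \<in> set_pmf p - gz p ` {..<n} \<Longrightarrow> pmf p y \<le> pmf p (gz p n)"
  using pick_spec(2)[OF gz_rest] by (simp add: gz_eq[of p n])

lemma gz_inj: "inj_on (gz p) (enum_index p)"
proof (rule inj_onI)
  fix i j assume i: "i \<in> enum_index p" and j: "j \<in> enum_index p" and eq: "gz p i = gz p j"
  have "\<not> i < j" using gz_in[OF j] eq by (metis Diff_iff image_eqI lessThan_iff)
  moreover have "\<not> j < i" using gz_in[OF i] eq by (metis Diff_iff image_eqI lessThan_iff)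
  ultimately show "i = j" by simp
qed

lemma gz_mono:
  assumes "i \<le> j" and j: "j \<in> enum_index p"
  shows "pmf p (gz p j) \<le> pmf p (gz p i)"
proof -
  have "gz p j \<in> set_pmf p - gz p ` {..<i}" using gz_in[OF j] assms(1) by auto
  then show ?thesis using gz_max[OF enum_index_down[OF j assms(1)]] by blast
qed

text \<open>The greedy enumeration exhausts the support: in the infinite case an
  element never picked would dominate infinitely many picked ones.\<close>
lemma gz_image: "gz p ` enum_index p = set_pmf p"
proof (cases "finite (set_pmf p)")
  case True
  let ?N = "card (set_pmf p)"
  have idx: "enum_index p = {..<?N}" using True by (simp add: enum_index_def)
  have sub: "gz p ` {..<?N} \<subseteq> set_pmf p" using gz_in idx by auto
  have "card (gz p ` {..<?N}) = ?N" using card_image[OF gz_inj[of p]] idx by simp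
  then show ?thesis using card_subset_eq[OF True sub] idx by simp
next
  case False
  have idx: "enum_index p = UNIV" using False by (simp add: enum_index_def)
  have sub: "range (gz p) \<subseteq> set_pmf p" using gz_in idx by blast
  show ?thesis
  proof (rule ccontr)
    assume "gz p ` enum_index p \<noteq> set_pmf p"
    then obtain x where x: "x \<in> set_pmf p" "x \<notin> range (gz p)" using sub idx by auto
    have "range (gz p) \<subseteq> {y. pmf p x \<le> pmf p y}"
      using x gz_max[of _ p x] idx by auto
    moreover have "pmf p x > 0" using x by (simp add: pmf_positive)
    ultimately have "finite (range (gz p))" using finite_pmf_ge finite_subset by blast
    moreover have "inj (gz p)" using gz_inj[of p] idx by simp
    ultimately show False using finite_imageD[of "gz p" UNIV] by simp
  qed
qed

lemma sorted_enum_ex: "\<exists>z. sorted_enum p z"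
  unfolding sorted_enum_def bij_betw_def
  using gz_inj[of p] gz_image[of p] gz_mono[of _ _ p] by blast

lemma sum_meas:
  assumes se: "sorted_enum p z" and sub: "{..<n} \<subseteq> enum_index p"
  shows "(\<Sum>i<n. pmf p (z i)) = measure_pmf.prob p (z ` {..<n})"
proof -
  have "inj_on z {..<n}" using se sub inj_on_subset
    unfolding sorted_enum_def bij_betw_def by blast
  then show ?thesis by (simp add: measure_measure_pmf_finite sum.reindex)
qed

lemma exists_big:
  assumes se: "sorted_enum p z" and d: "\<delta> < 1"
  shows "\<exists>n. {..<n} \<subseteq> enum_index p \<and> \<delta> < (\<Sum>i<n. pmf p (z i))"
proof (cases "finite (set_pmf p)")
  case True
  let ?N = "card (set_pmf p)"
  have idx: "enum_index p = {..<?N}" using True by (simp add: enum_index_def)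
  have "z ` {..<?N} = set_pmf p" using se idx unfolding sorted_enum_def bij_betw_def by simp
  hence "(\<Sum>i<?N. pmf p (z i)) = 1"
    using sum_meas[OF se, of ?N] idx by (simp add: measure_pmf.prob_eq_1 AE_measure_pmf)
  then show ?thesis using idx d by (intro exI[of _ ?N]) simp
next
  case False
  have idx: "enum_index p = UNIV" using False by (simp add: enum_index_def)
  have "range z = set_pmf p" using se idx unfolding sorted_enum_def bij_betw_def by simp
  then have un: "(\<Union>i. z ` {..<i}) = set_pmf p" by auto
  have "(\<lambda>i. measure_pmf.prob p (z ` {..<i})) \<longlonglongrightarrow> measure_pmf.prob p (\<Union>i. z ` {..<i})"
    by (rule measure_pmf.finite_Lim_measure_incseq) (auto simp: incseq_def)
  also have "measure_pmf.prob p (\<Union>i. z ` {..<i}) = 1"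
    using un measure_Int_set_pmf[of p UNIV] by simp
  finally have "eventually (\<lambda>i. \<delta> < measure_pmf.prob p (z ` {..<i})) sequentially"
    using d by (rule order_tendstoD)
  then obtain n where "\<delta> < measure_pmf.prob p (z ` {..<n})"
    by (meson eventually_sequentially order_refl)
  then show ?thesis using sum_meas[OF se, of n] idx by (intro exI[of _ n]) simp
qed

lemma mono_crossing_unique:
  fixes S :: "nat \<Rightarrow> real"
  assumes mono: "mono S" and start: "S 0 \<le> \<delta>" and stop: "\<delta> < S n"
  obtains k where "k < n" "S k \<le> \<delta>" "\<delta> < S (Suc k)"
    "\<And>k'. S k' \<le> \<delta> \<Longrightarrow> \<delta> < S (Suc k') \<Longrightarrow> k' = k"
proof -
  define k where "k = (LEAST k. \<delta> < S (Suc k))"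
  have n0: "n = Suc (n - 1)" using start stop by (cases n) auto
  have above: "\<delta> < S (Suc k)" unfolding k_def by (rule LeastI[of _ "n - 1"]) (use stop n0 in simp)
  have "k \<le> n - 1" unfolding k_def by (rule Least_le) (use stop n0 in simp)
  then have "k < n" using n0 by simp
  have below: "S k \<le> \<delta>"
  proof (cases k)
    case (Suc j)
    then show ?thesis using not_less_Least[of j "\<lambda>k. \<delta> < S (Suc k)"] k_def by simp
  qed (use start in simp)
  have "k' = k" if "S k' \<le> \<delta>" "\<delta> < S (Suc k')" for k'
    using monoD[OF mono, of "Suc k'" k] monoD[OF mono, of "Suc k" k'] that above below
    by (cases k' k rule: linorder_cases) auto
  then show ?thesis using that \<open>k < n\<close> below above by blast
qed

lemma cfun_spec:
  fixes p :: "'a pmf"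
  assumes d0: "0 \<le> \<delta>" and d1: "\<delta> < 1"
  obtains z k where "sorted_enum p z" "k \<in> enum_index p" "(\<Sum>i<k. pmf p (z i)) \<le> \<delta>"
    "\<delta> < (\<Sum>i\<le>k. pmf p (z i))" "cfun p \<delta> = ln (1 / pmf p (z k))"
proof -
  define z where "z = (SOME z. sorted_enum p z)"
  have se: "sorted_enum p z" unfolding z_def using someI_ex[OF sorted_enum_ex] .
  define S where "S n = (\<Sum>i<n. pmf p (z i))" for n
  have S_mono: "mono S" unfolding S_def by (intro monoI sum_mono2) auto
  have S_0: "S 0 \<le> \<delta>" using d0 by (simp add: S_def)
  obtain n where n: "{..<n} \<subseteq> enum_index p" "\<delta> < S n"
    using exists_big[OF se d1] unfolding S_def by blast
  obtain k where k: "k < n" "S k \<le> \<delta>" "\<delta> < S (Suc k)"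
    and uniq: "\<And>k'. S k' \<le> \<delta> \<Longrightarrow> \<delta> < S (Suc k') \<Longrightarrow> k' = k"
    using mono_crossing_unique[OF S_mono S_0 n(2)] by blast
  have k_idx: "k \<in> enum_index p" using k(1) n(1) by blast
  have crossing: "(\<Sum>i<k. pmf p (z i)) \<le> \<delta>" "\<delta> < (\<Sum>i\<le>k. pmf p (z i))"
    using k(2,3) unfolding S_def lessThan_Suc_atMost by simp_all
  have "(THE k. k \<in> enum_index p \<and> (\<Sum>i<k. pmf p (z i)) \<le> \<delta> \<and> \<delta> < (\<Sum>i\<le>k. pmf p (z i))) = k"
  proof (rule the_equality)
    fix k' assume "k' \<in> enum_index p \<and> (\<Sum>i<k'. pmf p (z i)) \<le> \<delta> \<and> \<delta> < (\<Sum>i\<le>k'. pmf p (z i))"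
    then show "k' = k" using uniq[of k'] unfolding S_def lessThan_Suc_atMost by blast
  qed (use k_idx crossing in blast)
  then have "cfun p \<delta> = ln (1 / pmf p (z k))"
    unfolding cfun_def Let_def z_def[symmetric] by simp
  then show ?thesis using that se k_idx crossing by blast
qed

lemma sorted_enum_pos:
  assumes "sorted_enum p z" and "k \<in> enum_index p"
  shows "pmf p (z k) > 0"
proof -
  have "z k \<in> set_pmf p" using assms unfolding sorted_enum_def bij_betw_def by blast
  then show ?thesis by (simp add: pmf_positive)
qed

lemma ln_inv_mono: "0 < a \<Longrightarrow> a \<le> b \<Longrightarrow> ln (1 / b) \<le> ln (1 / (a::real))"
  by (simp add: frac_le)

lemma cfun_quantile_lower:
  assumes "0 \<le> \<delta>" and "\<delta> < 1"
  shows "\<delta> < measure_pmf.prob p {x. ln (1 / pmf p x) \<le> cfun p \<delta>}"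
proof -
  obtain z k where se: "sorted_enum p z" and k: "k \<in> enum_index p"
    and above: "\<delta> < (\<Sum>i\<le>k. pmf p (z i))" and c: "cfun p \<delta> = ln (1 / pmf p (z k))"
    using cfun_spec[OF assms, of p] by metis
  have sub: "{..<Suc k} \<subseteq> enum_index p" using enum_index_down[OF k] by auto
  have first: "z ` {..<Suc k} \<subseteq> {x. ln (1 / pmf p x) \<le> cfun p \<delta>}"
  proof
    fix x assume "x \<in> z ` {..<Suc k}"
    then obtain i where i: "i \<le> k" "x = z i" by (auto simp: less_Suc_eq_le)
    have "pmf p (z k) \<le> pmf p (z i)"
      using se i k enum_index_down[OF k i(1)] unfolding sorted_enum_def by blast
    then show "x \<in> {x. ln (1 / pmf p x) \<le> cfun p \<delta>}"
      using ln_inv_mono[OF sorted_enum_pos[OF se k]] i c by simp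
  qed
  have "(\<Sum>i\<le>k. pmf p (z i)) = measure_pmf.prob p (z ` {..<Suc k})"
    using sum_meas[OF se sub] by (simp add: lessThan_Suc_atMost)
  also have "\<dots> \<le> measure_pmf.prob p {x. ln (1 / pmf p x) \<le> cfun p \<delta>}"
    using first by (rule measure_pmf.finite_measure_mono) simp
  finally show ?thesis using above by simp
qed

lemma cfun_quantile_upper:
  assumes "0 \<le> \<delta>" and "\<delta> < 1"
    and h: "\<delta> < measure_pmf.prob p {x. ln (1 / pmf p x) < t}"
  shows "cfun p \<delta> < t"
proof (rule ccontr)
  assume "\<not> cfun p \<delta> < t"
  hence tc: "t \<le> cfun p \<delta>" by simp
  obtain z k where se: "sorted_enum p z" and k: "k \<in> enum_index p"
    and below: "(\<Sum>i<k. pmf p (z i)) \<le> \<delta>" and c: "cfun p \<delta> = ln (1 / pmf p (z k))"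
    using cfun_spec[OF assms(1,2), of p] by metis
  have sub: "{..<k} \<subseteq> enum_index p" using enum_index_down[OF k] by auto
  have "{x. ln (1 / pmf p x) < t} \<inter> set_pmf p \<subseteq> z ` {..<k}"
  proof
    fix x assume x: "x \<in> {x. ln (1 / pmf p x) < t} \<inter> set_pmf p"
    then obtain j where j: "j \<in> enum_index p" "x = z j"
      using se unfolding sorted_enum_def bij_betw_def by (metis IntD2 imageE)
    have "j < k"
    proof (rule ccontr)
      assume "\<not> j < k"
      hence "pmf p (z j) \<le> pmf p (z k)" using se j k unfolding sorted_enum_def by auto
      hence "ln (1 / pmf p (z k)) \<le> ln (1 / pmf p (z j))"
        using ln_inv_mono sorted_enum_pos[OF se j(1)] by blast
      then show False using x j tc c by simp
    qed
    then show "x \<in> z ` {..<k}" using j by auto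
  qed
  hence "measure_pmf.prob p ({x. ln (1 / pmf p x) < t} \<inter> set_pmf p) \<le> measure_pmf.prob p (z ` {..<k})"
    by (intro measure_pmf.finite_measure_mono) auto
  hence "measure_pmf.prob p {x. ln (1 / pmf p x) < t} \<le> \<delta>"
    using below sum_meas[OF se sub] by (simp add: measure_Int_set_pmf)
  then show False using h by simp
qed

lemma cfun_shift_bound:
  assumes dom: "\<And>c. - \<epsilon> < measure_pmf.prob q {y. ln (1 / pmf q y) < c + m}
                          - measure_pmf.prob p {x. ln (1 / pmf p x) < c}"
    and m: "0 < m" and "0 \<le> \<delta>" and "\<delta> + \<epsilon> < 1" and "0 < \<epsilon>"
  shows "- (2 * m) \<le> cfun p (\<delta> + \<epsilon>) - cfun q \<delta>"
proof -
  define a where "a = cfun p (\<delta> + \<epsilon>)"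
  have "\<delta> + \<epsilon> < measure_pmf.prob p {x. ln (1 / pmf p x) \<le> a}"
    unfolding a_def using cfun_quantile_lower[of "\<delta> + \<epsilon>" p] assms by simp
  also have "\<dots> \<le> measure_pmf.prob p {x. ln (1 / pmf p x) < a + m}"
    by (rule measure_pmf.finite_measure_mono) (use m in auto)
  finally have "\<delta> < measure_pmf.prob q {y. ln (1 / pmf q y) < (a + m) + m}"
    using dom[of "a + m"] by simp
  then have "cfun q \<delta> < a + m + m" using cfun_quantile_upper[of \<delta> q] assms by simp
  then show ?thesis unfolding a_def by simp
qed

lemma liminf_nonneg_of_eventually_ge:
  fixes f :: "nat \<Rightarrow> ereal"
  assumes "\<And>e. 0 < e \<Longrightarrow> eventually (\<lambda>n. ereal (- e) \<le> f n) sequentially"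
  shows "0 \<le> liminf f"
proof (rule ereal_le_epsilon2)
  fix e :: real assume "0 < e"
  then have "ereal (- e) \<le> liminf f" by (intro Liminf_bounded assms)
  then show "0 \<le> liminf f + ereal e"
    using add_right_mono[of "ereal (- e)" "liminf f" "ereal e"] by (simp add: zero_ereal_def)
qed

theorem lemma7:
  fixes PX :: "nat \<Rightarrow> 'a pmf" and PY :: "nat \<Rightarrow> 'b pmf"
  assumes "(INF m\<in>{0::real<..}. liminf (\<lambda>n. INF c::real. ereal (
              measure_pmf.prob (PY n) {y. ln (1 / pmf (PY n) y) < c + m}
            - measure_pmf.prob (PX n) {x. ln (1 / pmf (PX n) x) < c}))) \<ge> 0"
  shows "(INF \<epsilon>\<in>{0::real<..<1}. liminf (\<lambda>n. INF \<delta>\<in>{0..<1 - \<epsilon>}.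
              ereal (cfun (PX n) (\<delta> + \<epsilon>) - cfun (PY n) \<delta>))) \<ge> 0"
proof (rule INF_greatest, rule liminf_nonneg_of_eventually_ge)
  fix \<epsilon> e :: real assume "\<epsilon> \<in> {0<..<1}" and "0 < e"
  then have eps: "0 < \<epsilon>" and m: "0 < e / 2" by auto
  have "0 \<le> liminf (\<lambda>n. INF c::real. ereal (
              measure_pmf.prob (PY n) {y. ln (1 / pmf (PY n) y) < c + e / 2}
            - measure_pmf.prob (PX n) {x. ln (1 / pmf (PX n) x) < c}))"
    using order_trans[OF assms INF_lower[of "e / 2" "{0<..}"]] m by simp
  then have "eventually (\<lambda>n. ereal (- \<epsilon>) < (INF c::real. ereal (
              measure_pmf.prob (PY n) {y. ln (1 / pmf (PY n) y) < c + e / 2}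
            - measure_pmf.prob (PX n) {x. ln (1 / pmf (PX n) x) < c}))) sequentially"
    using eps unfolding le_Liminf_iff by simp
  then show "eventually (\<lambda>n. ereal (- e) \<le> (INF \<delta>\<in>{0..<1 - \<epsilon>}.
              ereal (cfun (PX n) (\<delta> + \<epsilon>) - cfun (PY n) \<delta>))) sequentially"
  proof (rule eventually_mono)
    fix n assume dom: "ereal (- \<epsilon>) < (INF c::real. ereal (
              measure_pmf.prob (PY n) {y. ln (1 / pmf (PY n) y) < c + e / 2}
            - measure_pmf.prob (PX n) {x. ln (1 / pmf (PX n) x) < c}))"
    show "ereal (- e) \<le> (INF \<delta>\<in>{0..<1 - \<epsilon>}. ereal (cfun (PX n) (\<delta> + \<epsilon>) - cfun (PY n) \<delta>))"
      using cfun_shift_bound[OF _ m, of \<epsilon> "PY n" "PX n"] less_INF_D[OF dom] eps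
      by (intro INF_greatest) auto
  qed
qed

end
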